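(* Let $p\in[0,1)$, $\alpha\in[0,1]$, $0\le h_1<\dots<h_N\le1$, and nonnegative weights $f_0^S(h_j),f_0^{NS}(h_j)$, $j=1,\dots,N$, each summing to $1$; set $f_0(h_j)=\alpha f_0^S(h_j)+(1-\alpha)f_0^{NS}(h_j)$, assume $f_0(h_N)>0$, and let $f_0([h_i,1])=\sum_{j\ge i}f_0(h_j)$. Let $m_0^{S,j}\in[-1,1]$ be given. Let $f^{NS,1},\dots,f^{NS,N}\in C([0,+\infty),P([-1,1]))$ (weak topology) with initial data $f_0^{NS,i}$, write $m^{NS,j}(t)=\int_{-1}^1w\,f^{NS,j}(t,dw)$, $$m(t)=\alpha\sum_{j}f_0^S(h_j)m_0^{S,j}+(1-\alpha)\sum_jf_0^{NS}(h_j)m^{NS,j}(t),\quad \beta_i(t)=\alpha\sum_{j\ge i}f_0^S(h_j)m_0^{S,j}+(1-\alpha)\sum_{j\ge i}f_0^{NS}(h_j)m^{NS,j}(t),$$ and assume that for all $i$, $t\ge0$ and $\phi\in C^1([-1,1])$, $$\int\phi\,df^{NS,i}(t)=\int\phi\,df_0^{NS,i}+\int_0^t\!\!\int_{-1}^1\phi'(w)\Big[p\big(m(s)-w\big)+(1-p)\big(\beta_i(s)-f_0([h_i,1])w\big)\Big]f^{NS,i}(s,dw)\,ds.$$ Then for every $i=1,\dots,N$, $$\frac{d}{dt}m^{NS,i}(t)=\alpha\sum_{j=1}^Nm_0^{S,j}\big(p+(1-p)1_{\{j\ge i\}}\big)f_0^S(h_j)+(1-\alpha)\sum_{j=1}^N\big(p+(1-p)1_{\{j\ge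 i\}}\big)f_0^{NS}(h_j)m^{NS,j}(t)-\big(p+(1-p)f_0([h_i,1])\big)m^{NS,i}(t).$$
   Context: $P([-1,1])$ is the set of Borel probability measures on $[-1,1]$. Interpretation: $f^{NS,i}(t)$ is the opinion distribution of non-stubborn individuals at hierarchy level $h_i$, $m^{NS,i}$ its mean, $m_0^{S,j}$ the mean opinion of stubborn individuals at level $h_j$, $\alpha$ the fraction of stubborn individuals. *)

theory Defs
  imports "HOL-Probability.Probability"
begin

definition prob_on_I :: "real measure \<Rightarrow> bool" where
  "prob_on_I M \<longleftrightarrow> prob_space M \<and> sets M = sets (restrict_space borel {-1..1::real})"

text \<open>Continuity of a curve of measures in the weak topology on P([-1,1]): the weak topology
  is the coarsest topology making all maps mu |-> int phi dmu (phi continuous on [-1,1]) continuous.\<close>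
definition weakly_continuous_on :: "real set \<Rightarrow> (real \<Rightarrow> real measure) \<Rightarrow> bool" where
  "weakly_continuous_on T F \<longleftrightarrow>
     (\<forall>\<phi>::real \<Rightarrow> real. continuous_on {-1..1::real} \<phi> \<longrightarrow> continuous_on T (\<lambda>t. \<integral>w. \<phi> w \<partial>F t))"

definition C1_on_I :: "(real \<Rightarrow> real) \<Rightarrow> (real \<Rightarrow> real) \<Rightarrow> bool" where
  "C1_on_I \<phi> \<phi>' \<longleftrightarrow>
     (\<forall>w\<in>{-1..1}. (\<phi> has_real_derivative \<phi>' w) (at w within {-1..1})) \<and> continuous_on {-1..1} \<phi>'"

definition mean :: "real measure \<Rightarrow> real" where
  "mean M = (\<integral>w. w \<partial>M)"

definition f0 :: "real \<Rightarrow> (real \<Rightarrow> real) \<Rightarrow> (real \<Rightarrow> real) \<Rightarrow> real \<Rightarrow> real" where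
  "f0 \<alpha> fS fNS x = \<alpha> * fS x + (1 - \<alpha>) * fNS x"

definition f0_tail :: "real \<Rightarrow> (real \<Rightarrow> real) \<Rightarrow> (real \<Rightarrow> real) \<Rightarrow> (nat \<Rightarrow> real) \<Rightarrow> nat \<Rightarrow> nat \<Rightarrow> real" where
  "f0_tail \<alpha> fS fNS h N i = (\<Sum>j=i..N. f0 \<alpha> fS fNS (h j))"

definition mtot :: "real \<Rightarrow> (real \<Rightarrow> real) \<Rightarrow> (real \<Rightarrow> real) \<Rightarrow> (nat \<Rightarrow> real) \<Rightarrow> nat
    \<Rightarrow> (nat \<Rightarrow> real) \<Rightarrow> (nat \<Rightarrow> real \<Rightarrow> real measure) \<Rightarrow> real \<Rightarrow> real" where
  "mtot \<alpha> fS fNS h N m0S F t =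
     \<alpha> * (\<Sum>j=1..N. fS (h j) * m0S j) + (1 - \<alpha>) * (\<Sum>j=1..N. fNS (h j) * mean (F j t))"

definition beta :: "real \<Rightarrow> (real \<Rightarrow> real) \<Rightarrow> (real \<Rightarrow> real) \<Rightarrow> (nat \<Rightarrow> real) \<Rightarrow> nat
    \<Rightarrow> (nat \<Rightarrow> real) \<Rightarrow> (nat \<Rightarrow> real \<Rightarrow> real measure) \<Rightarrow> nat \<Rightarrow> real \<Rightarrow> real" where
  "beta \<alpha> fS fNS h N m0S F i t =
     \<alpha> * (\<Sum>j=i..N. fS (h j) * m0S j) + (1 - \<alpha>) * (\<Sum>j=i..N. fNS (h j) * mean (F j t))"

end

theory Submission
  imports Defs
begin

text \<open>Testing the weak formulation with \<open>\<phi> w = w\<close> gives an integral equation for the mean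
  of \<open>f^{NS,i}\<close>. The drift is affine in \<open>w\<close>, so its integral against \<open>f^{NS,i}(s)\<close> only
  involves means, which are continuous in \<open>s\<close> by weak continuity; the fundamental theorem of
  calculus then yields the derivative, and regrouping \<open>p m + (1 - p) \<beta>\<^sub>i\<close> by hierarchy level
  gives the stated form. Only the weak formulation, weak continuity and \<open>f^{NS,i}(t) \<in> P([-1,1])\<close>
  are used.\<close>

lemma prob_on_I_integrable_ident:
  assumes "prob_on_I M"
  shows "integrable M (\<lambda>w. w)"
proof -
  have ps: "prob_space M" and sets: "sets M = sets (restrict_space borel {-1..1::real})"
    using assms unfolding prob_on_I_def by auto
  have "space M = {-1..1}"
    using sets_eq_imp_space_eq[OF sets] by (simp add: space_restrict_space)
  moreover have "(\<lambda>w. w) \<in> borel_measurable M"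
    by (subst measurable_cong_sets[OF sets refl]) (simp add: measurable_restrict_space1)
  ultimately show ?thesis
    using ps by (intro finite_measure.integrable_const_bound[where B=1])
      (auto simp: prob_space_def intro!: AE_I2)
qed

lemma prob_on_I_integral_affine:
  assumes "prob_on_I M"
  shows "(\<integral>w. a - b * w \<partial>M) = a - b * mean M"
proof -
  have "prob_space M"
    using assms unfolding prob_on_I_def by auto
  then show ?thesis
    using prob_on_I_integrable_ident[OF assms]
    by (simp add: mean_def prob_space.prob_space prob_space_def finite_measure.integrable_const)
qed

lemma prob_on_I_integral_drift:
  assumes "prob_on_I M"
  shows "(\<integral>w. 1 * (p * (m - w) + q * (b - c * w)) \<partial>M) = p * m + q * b - (p + q * c) * mean M"
proof -
  have "(\<integral>w. 1 * (p * (m - w) + q * (b - c * w)) \<partial>M) = (\<integral>w. (p * m + q * b) - (p + q * c) * w \<partial>M)"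
    by (rule Bochner_Integration.integral_cong) (simp_all add: algebra_simps)
  then show ?thesis
    using prob_on_I_integral_affine[OF assms] by simp
qed

lemma weakly_continuous_on_mean:
  assumes "weakly_continuous_on T F"
  shows "continuous_on T (\<lambda>t. mean (F t))"
  using assms continuous_on_id unfolding weakly_continuous_on_def mean_def by blast

lemma C1_on_I_ident: "C1_on_I (\<lambda>w. w) (\<lambda>_. 1)"
  unfolding C1_on_I_def by (auto intro: DERIV_ident[THEN has_field_derivative_at_within])

lemma has_real_derivative_integral_equation:
  fixes f g :: "real \<Rightarrow> real"
  assumes g: "continuous_on {a..} g"
    and f: "\<And>u. a \<le> u \<Longrightarrow> f u = c + (LINT s:{a..u}|lborel. g s)"
    and t: "a \<le> t"
  shows "(f has_real_derivative g t) (at t within {a..})"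
proof -
  have Lebesgue_eq_HK: "(LINT s:{a..u}|lborel. g s) = integral {a..u} g" for u
    by (rule set_borel_integral_eq_integral
        [OF borel_integrable_atLeastAtMost'[OF continuous_on_subset[OF g]]]) auto
  have "((\<lambda>u. integral {a..u} g) has_real_derivative g t) (at t within {a..t+1})"
    by (rule integral_has_real_derivative) (use g t in \<open>auto intro: continuous_on_subset\<close>)
  moreover have "at t within {a..t+1} = at t within {a..}"
    by (rule at_within_nhd[where S="{..<t+1}"]) auto
  ultimately have "((\<lambda>u. c + integral {a..u} g) has_real_derivative g t) (at t within {a..})"
    by (auto intro!: derivative_eq_intros)
  then show ?thesis
    by (rule has_field_derivative_transform_within[where d=1]) (use f Lebesgue_eq_HK t in auto)
qed

lemma sum_if_le_eq_sum_from:
  fixes a :: "nat \<Rightarrow> 'a::comm_semiring_1"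
  assumes "m \<le> i"
  shows "(\<Sum>j=m..n. (if i \<le> j then 1 else 0) * a j) = (\<Sum>j=i..n. a j)"
proof -
  have "(\<Sum>j=m..n. (if i \<le> j then 1 else 0) * a j) = (\<Sum>j\<in>{m..n} \<inter> {j. i \<le> j}. a j)"
    by (simp add: sum.inter_restrict) (rule sum.cong; simp)
  also have "{m..n} \<inter> {j. i \<le> j} = {i..n}"
    using assms by auto
  finally show ?thesis .
qed

lemma mtot_beta_combination:
  assumes "1 \<le> i"
  shows "p * mtot \<alpha> fS fNS h N m0S F t + (1 - p) * beta \<alpha> fS fNS h N m0S F i t =
    \<alpha> * (\<Sum>j=1..N. m0S j * (p + (1 - p) * (if j \<ge> i then 1 else 0)) * fS (h j))
    + (1 - \<alpha>) * (\<Sum>j=1..N. (p + (1 - p) * (if j \<ge> i then 1 else 0)) * fNS (h j) * mean (F j t))"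
  unfolding mtot_def beta_def
  by (simp add: sum_if_le_eq_sum_from[OF assms, symmetric] sum_distrib_left
      sum.distrib[symmetric] algebra_simps)

theorem proposition4p3:
  fixes p \<alpha> :: real and N :: nat and h :: "nat \<Rightarrow> real"
    and fS fNS :: "real \<Rightarrow> real" and m0S :: "nat \<Rightarrow> real"
    and F :: "nat \<Rightarrow> real \<Rightarrow> real measure" and F0 :: "nat \<Rightarrow> real measure"
  assumes "0 \<le> p" "p < 1" "0 \<le> \<alpha>" "\<alpha> \<le> 1" "1 \<le> N"
    and "0 \<le> h 1" "h N \<le> 1" "\<forall>i j. 1 \<le> i \<longrightarrow> i < j \<longrightarrow> j \<le> N \<longrightarrow> h i < h j"
    and "\<forall>j\<in>{1..N}. 0 \<le> fS (h j)" "\<forall>j\<in>{1..N}. 0 \<le> fNS (h j)"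
    and "(\<Sum>j=1..N. fS (h j)) = 1" "(\<Sum>j=1..N. fNS (h j)) = 1"
    and "f0 \<alpha> fS fNS (h N) > 0"
    and "\<forall>j\<in>{1..N}. -1 \<le> m0S j \<and> m0S j \<le> 1"
    and "\<forall>i\<in>{1..N}. prob_on_I (F0 i)"
    and "\<forall>i\<in>{1..N}. \<forall>t\<ge>0. prob_on_I (F i t)"
    and "\<forall>i\<in>{1..N}. weakly_continuous_on {0..} (F i)"
    and "\<forall>i\<in>{1..N}. F i 0 = F0 i"
    and "\<forall>i\<in>{1..N}. \<forall>t\<ge>0. \<forall>\<phi> \<phi>'. C1_on_I \<phi> \<phi>' \<longrightarrow>
           (\<integral>w. \<phi> w \<partial>F i t) = (\<integral>w. \<phi> w \<partial>F0 i) +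
             (LINT s:{0..t}|lborel. (\<integral>w. \<phi>' w *
                (p * (mtot \<alpha> fS fNS h N m0S F s - w)
                 + (1 - p) * (beta \<alpha> fS fNS h N m0S F i s - f0_tail \<alpha> fS fNS h N i * w)) \<partial>F i s))"
  shows "\<forall>i\<in>{1..N}. \<forall>t\<ge>0.
    ((\<lambda>t. mean (F i t)) has_real_derivative
       (\<alpha> * (\<Sum>j=1..N. m0S j * (p + (1 - p) * (if j \<ge> i then 1 else 0)) * fS (h j))
        + (1 - \<alpha>) * (\<Sum>j=1..N. (p + (1 - p) * (if j \<ge> i then 1 else 0)) * fNS (h j) * mean (F j t))
        - (p + (1 - p) * f0_tail \<alpha> fS fNS h N i) * mean (F i t)))
    (at t within {0..})"
proof (intro ballI allI impI)
  fix i t assume i: "i \<in> {1..N}" and t: "(0::real) \<le> t"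
  define c where "c = f0_tail \<alpha> fS fNS h N i"
  define g where "g s = p * mtot \<alpha> fS fNS h N m0S F s + (1 - p) * beta \<alpha> fS fNS h N m0S F i s
      - (p + (1 - p) * c) * mean (F i s)" for s
  have "continuous_on {0..} g"
    unfolding g_def mtot_def beta_def using i assms(17)
    by (intro continuous_intros continuous_on_sum weakly_continuous_on_mean) auto
  moreover have "mean (F i u) = mean (F0 i) + (LINT s:{0..u}|lborel. g s)" if "0 \<le> u" for u
  proof -
    have "(\<integral>w. 1 * (p * (mtot \<alpha> fS fNS h N m0S F s - w)
            + (1 - p) * (beta \<alpha> fS fNS h N m0S F i s - c * w)) \<partial>F i s) = g s" if "0 \<le> s" for s
      using prob_on_I_integral_drift assms(16) i that by (simp add: g_def)
    then show ?thesis
      using assms(19) i \<open>0 \<le> u\<close> C1_on_I_ident unfolding mean_def c_def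
      by (auto intro!: set_lebesgue_integral_cong)
  qed
  ultimately have "((\<lambda>u. mean (F i u)) has_real_derivative g t) (at t within {0..})"
    using t by (rule has_real_derivative_integral_equation)
  then show "((\<lambda>t. mean (F i t)) has_real_derivative
       (\<alpha> * (\<Sum>j=1..N. m0S j * (p + (1 - p) * (if j \<ge> i then 1 else 0)) * fS (h j))
        + (1 - \<alpha>) * (\<Sum>j=1..N. (p + (1 - p) * (if j \<ge> i then 1 else 0)) * fNS (h j) * mean (F j t))
        - (p + (1 - p) * f0_tail \<alpha> fS fNS h N i) * mean (F i t)))
    (at t within {0..})"
    using i by (simp add: g_def c_def mtot_beta_combination)
qed

end
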